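(* Let $\mathcal D[t]\subset\mathcal H\subset\mathcal D^\times[t^\times]$ be a rigged Hilbert space with $\mathcal D[t]$ reflexive, $(X,\mu)$ a $\sigma$-finite measure space, $\omega,\theta:X\to\mathcal D^\times$ weakly measurable maps and $m:X\to\mathbb C$ measurable such that $D(M_{m,\omega,\theta})=\mathcal D$. (i) If there is $J\in\mathcal L(\mathcal D)$ with $M_{m,\omega,\theta}Jf=f$ for all $f\in\mathcal D$, then the map $\rho:X\to\mathcal D^\times$, $\rho_x=J^\times(\overline{m(x)}\omega_x)$, satisfies $\langle f,g\rangle=\int_X\langle f,\rho_x\rangle\langle\theta_x,g\rangle d\mu$ for all $f,g\in\mathcal D$. (ii) If there is $K\in\mathcal L(\mathcal D^\times)$ with $KM_{m,\omega,\theta}f=f$ for all $f\in\mathcal D$, then the map $\tau:X\to\mathcal D^\times$, $\tau_x=K(m(x)\theta_x)$, satisfies $\langle f,g\rangle=\int_X\langle f,\omega_x\rangle\langle\tau_x,g\rangle d\mu$ for all $f,g\in\mathcal D$.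
   Context: Rigged Hilbert space: $\mathcal D$ dense subspace of Hilbert space $\mathcal H$ with a locally convex topology $t$ finer than the norm topology, $\mathcal D^\times$ its conjugate dual with strong dual topology, $\mathcal H\subset\mathcal D^\times$, the pairing $\langle F,f\rangle$ extends the inner product, and $\langle f,F\rangle:=\overline{\langle F,f\rangle}$. $\omega$ weakly measurable means $x\mapsto\langle f,\omega_x\rangle$ is measurable for each $f\in\mathcal D$. Distribution multiplier $M_{m,\omega,\theta}$: its domain is the set of $f\in\mathcal D$ such that $\int_X m(x)\langle f,\omega_x\rangle\langle\theta_x,g\rangle d\mu$ converges for all $g\in\mathcal D$ and defines a functional of $g$ bounded in the $\mathcal H$-norm; $M_{m,\omega,\theta}f\in\mathcal H$ is the Riesz representative: $\langle M_{m,\omega,\theta}f,g\rangle=\int_X m(x)\langle f,\omega_x\rangle\langle\theta_x,g\rangle d\mu$. $\mathcal L(\mathcal D)$ (resp. $\mathcal L(\mathcal D^\times)$) is the algebra of continuous linear operators on $\mathcal D[t]$ (resp. $\mathcal D^\times[t^\times]$). For $J\in\mathcal L(\mathcal D)$, $J^\times\in\mathcal L(\mathcal D^\times)$ is the adjoint: $\langle F,Jg\rangle=\langle J^\times F,g\rangle$ for $F\in\mathcal D^\times,g\in\mathcal D$; similarly $K\in\mathcal L(\mathcal D^\times)$ has adjoint $K^\times\in\mathcal L(\mathcal D)$. *)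

theory Defs
  imports "HOL-Analysis.Analysis" "HOL-Library.Function_Algebras"
begin

text \<open>The Hilbert space H is the whole type 'h, with addition from ab_group_add,
complex scalar multiplication sm and inner product ip (linear in the first,
conjugate linear in the second argument).\<close>

definition hnorm :: "('h \<Rightarrow> 'h \<Rightarrow> complex) \<Rightarrow> 'h \<Rightarrow> real" where
  "hnorm ip x = sqrt (Re (ip x x))"

definition complex_hilbert ::
  "(complex \<Rightarrow> 'h::ab_group_add \<Rightarrow> 'h) \<Rightarrow> ('h \<Rightarrow> 'h \<Rightarrow> complex) \<Rightarrow> bool" where
  "complex_hilbert sm ip \<longleftrightarrow>
     (\<forall>a x y. sm a (x + y) = sm a x + sm a y) \<and>
     (\<forall>a b x. sm (a + b) x = sm a x + sm b x) \<and>
     (\<forall>a b x. sm a (sm b x) = sm (a * b) x) \<and>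
     (\<forall>x. sm 1 x = x) \<and>
     (\<forall>x y z. ip (x + y) z = ip x z + ip y z) \<and>
     (\<forall>a x y. ip (sm a x) y = a * ip x y) \<and>
     (\<forall>x y. ip y x = cnj (ip x y)) \<and>
     (\<forall>x. Im (ip x x) = 0 \<and> 0 \<le> Re (ip x x)) \<and>
     (\<forall>x. ip x x = 0 \<longrightarrow> x = 0) \<and>
     (\<forall>X::nat \<Rightarrow> 'h. (\<forall>e>0. \<exists>N. \<forall>m\<ge>N. \<forall>n\<ge>N. hnorm ip (X m - X n) < e) \<longrightarrow>
          (\<exists>L. \<forall>e>0. \<exists>N. \<forall>n\<ge>N. hnorm ip (X n - L) < e))"

definition is_seminorm_on ::
  "(complex \<Rightarrow> 'a::ab_group_add \<Rightarrow> 'a) \<Rightarrow> 'a set \<Rightarrow> ('a \<Rightarrow> real) \<Rightarrow> bool" where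
  "is_seminorm_on sm S p \<longleftrightarrow>
     (\<forall>x\<in>S. \<forall>y\<in>S. p (x + y) \<le> p x + p y) \<and> (\<forall>c. \<forall>x\<in>S. p (sm c x) = cmod c * p x)"

definition seminorm_topology :: "'a::ab_group_add set \<Rightarrow> ('a \<Rightarrow> real) set \<Rightarrow> 'a topology" where
  "seminorm_topology S Q =
     topology_generated_by (insert S {{y\<in>S. q (y - x) < r} | q x r. q \<in> Q \<and> x \<in> S})"

definition bounded_set :: "'a set \<Rightarrow> ('a \<Rightarrow> real) set \<Rightarrow> 'a set \<Rightarrow> bool" where
  "bounded_set S Q B \<longleftrightarrow> B \<subseteq> S \<and> (\<forall>q\<in>Q. bdd_above (q ` B))"

definition conj_dual ::
  "(complex \<Rightarrow> 'a::ab_group_add \<Rightarrow> 'a) \<Rightarrow> 'a set \<Rightarrow> ('a \<Rightarrow> real) set \<Rightarrow> ('a \<Rightarrow> complex) set" where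
  "conj_dual sm S Q = {F. continuous_map (seminorm_topology S Q) euclidean F \<and>
      (\<forall>x\<in>S. \<forall>y\<in>S. F (x + y) = F x + F y) \<and>
      (\<forall>c. \<forall>x\<in>S. F (sm c x) = cnj c * F x) \<and>
      (\<forall>x. x \<notin> S \<longrightarrow> F x = 0)}"

text \<open>Seminorms of the strong dual topology (uniform convergence on bounded sets).\<close>
definition strong_seminorms ::
  "'a set \<Rightarrow> ('a \<Rightarrow> real) set \<Rightarrow> (('a \<Rightarrow> complex) \<Rightarrow> real) set" where
  "strong_seminorms S Q =
     {(\<lambda>F. SUP x\<in>B. cmod (F x)) | B. bounded_set S Q B \<and> B \<noteq> {}}"

definition dual_sm :: "complex \<Rightarrow> ('a \<Rightarrow> complex) \<Rightarrow> ('a \<Rightarrow> complex)" where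
  "dual_sm c F = (\<lambda>x. c * F x)"

text \<open>Canonical map of S into its conjugate bidual: f maps to F \<mapsto> <f,F> = cnj (F f).\<close>
definition canonical_bidual ::
  "(complex \<Rightarrow> 'a::ab_group_add \<Rightarrow> 'a) \<Rightarrow> 'a set \<Rightarrow> ('a \<Rightarrow> real) set \<Rightarrow> 'a \<Rightarrow> (('a \<Rightarrow> complex) \<Rightarrow> complex)" where
  "canonical_bidual sm S Q f = (\<lambda>F. if F \<in> conj_dual sm S Q then cnj (F f) else 0)"

definition reflexive_lcs :: "(complex \<Rightarrow> 'a::ab_group_add \<Rightarrow> 'a) \<Rightarrow> 'a set \<Rightarrow> ('a \<Rightarrow> real) set \<Rightarrow> bool" where
  "reflexive_lcs sm S Q \<longleftrightarrow>
     (let Dx = conj_dual sm S Q; Qx = strong_seminorms S Q;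
          Dxx = conj_dual dual_sm Dx Qx; Qxx = strong_seminorms Dx Qx
      in canonical_bidual sm S Q ` S = Dxx \<and>
         homeomorphic_map (seminorm_topology S Q) (seminorm_topology Dxx Qxx)
           (canonical_bidual sm S Q))"

definition rigged_hilbert ::
  "(complex \<Rightarrow> 'h::ab_group_add \<Rightarrow> 'h) \<Rightarrow> ('h \<Rightarrow> 'h \<Rightarrow> complex) \<Rightarrow> 'h set \<Rightarrow> ('h \<Rightarrow> real) set \<Rightarrow> bool" where
  "rigged_hilbert sm ip D P \<longleftrightarrow>
     complex_hilbert sm ip \<and>
     \<comment> \<open>D is a linear subspace\<close>
     0 \<in> D \<and> (\<forall>f\<in>D. \<forall>g\<in>D. f + g \<in> D) \<and> (\<forall>c. \<forall>f\<in>D. sm c f \<in> D) \<and>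
     \<comment> \<open>D is dense in H\<close>
     (\<forall>h. \<forall>e>0. \<exists>f\<in>D. hnorm ip (h - f) < e) \<and>
     \<comment> \<open>t is a locally convex topology given by the seminorms P\<close>
     (\<forall>p\<in>P. is_seminorm_on sm D p) \<and>
     \<comment> \<open>t is finer than the norm topology on D\<close>
     (\<forall>U. U \<subseteq> D \<and> (\<forall>f\<in>U. \<exists>e>0. {g\<in>D. hnorm ip (g - f) < e} \<subseteq> U)
          \<longrightarrow> openin (seminorm_topology D P) U)"

text \<open>Embedding of H into D^x: h is identified with the functional f \<mapsto> <h,f>.\<close>
definition emb :: "('h \<Rightarrow> 'h \<Rightarrow> complex) \<Rightarrow> 'h set \<Rightarrow> 'h \<Rightarrow> ('h \<Rightarrow> complex)" where
  "emb ip D h = (\<lambda>f. if f \<in> D then ip h f else 0)"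

definition cont_ops ::
  "(complex \<Rightarrow> 'a::ab_group_add \<Rightarrow> 'a) \<Rightarrow> 'a set \<Rightarrow> ('a \<Rightarrow> real) set \<Rightarrow> ('a \<Rightarrow> 'a) set" where
  "cont_ops sm S Q = {J. J ` S \<subseteq> S \<and>
      (\<forall>x\<in>S. \<forall>y\<in>S. J (x + y) = J x + J y) \<and> (\<forall>c. \<forall>x\<in>S. J (sm c x) = sm c (J x)) \<and>
      continuous_map (seminorm_topology S Q) (seminorm_topology S Q) J}"

definition adj_op :: "'h set \<Rightarrow> ('h \<Rightarrow> 'h) \<Rightarrow> ('h \<Rightarrow> complex) \<Rightarrow> ('h \<Rightarrow> complex)" where
  "adj_op D J F = (\<lambda>g. if g \<in> D then F (J g) else 0)"

text \<open><f, omega_x> = cnj (omega x f), <theta_x, g> = theta x g.\<close>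
definition mult_integrand ::
  "('x \<Rightarrow> complex) \<Rightarrow> ('x \<Rightarrow> 'h \<Rightarrow> complex) \<Rightarrow> ('x \<Rightarrow> 'h \<Rightarrow> complex) \<Rightarrow> 'h \<Rightarrow> 'h \<Rightarrow> 'x \<Rightarrow> complex" where
  "mult_integrand m \<omega> \<theta> f g x = m x * cnj (\<omega> x f) * \<theta> x g"

definition mult_domain ::
  "('h \<Rightarrow> 'h \<Rightarrow> complex) \<Rightarrow> 'h set \<Rightarrow> 'x measure \<Rightarrow> ('x \<Rightarrow> complex) \<Rightarrow>
   ('x \<Rightarrow> 'h \<Rightarrow> complex) \<Rightarrow> ('x \<Rightarrow> 'h \<Rightarrow> complex) \<Rightarrow> 'h set" where
  "mult_domain ip D \<mu> m \<omega> \<theta> = {f\<in>D.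
      (\<forall>g\<in>D. integrable \<mu> (mult_integrand m \<omega> \<theta> f g)) \<and>
      (\<exists>C. \<forall>g\<in>D. cmod (integral\<^sup>L \<mu> (mult_integrand m \<omega> \<theta> f g)) \<le> C * hnorm ip g)}"

text \<open>M f is the Riesz representative in H of the bounded functional.\<close>
definition multiplier ::
  "('h \<Rightarrow> 'h \<Rightarrow> complex) \<Rightarrow> 'h set \<Rightarrow> 'x measure \<Rightarrow> ('x \<Rightarrow> complex) \<Rightarrow>
   ('x \<Rightarrow> 'h \<Rightarrow> complex) \<Rightarrow> ('x \<Rightarrow> 'h \<Rightarrow> complex) \<Rightarrow> 'h \<Rightarrow> 'h" where
  "multiplier ip D \<mu> m \<omega> \<theta> f =
     (THE h. \<forall>g\<in>D. ip h g = integral\<^sup>L \<mu> (mult_integrand m \<omega> \<theta> f g))"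

end

theory Submission
  imports Defs
begin

text \<open>For \<open>f \<in> D\<close> the multiplier value \<open>M f\<close> is the Riesz representative of
  \<open>g \<mapsto> \<integral> m \<langle>f,\<omega>\<^sub>x\<rangle> \<langle>\<theta>\<^sub>x,g\<rangle>\<close>; the Riesz theorem is needed for a bounded
  conjugate-linear functional given only on the dense subspace \<open>D\<close>.
  (i) \<open>\<rho>\<close> is built so that \<open>\<langle>f,\<rho>\<^sub>x\<rangle> \<langle>\<theta>\<^sub>x,g\<rangle>\<close> is the integrand of \<open>M\<close> at \<open>(J f, g)\<close>,
  so the integral is \<open>\<langle>M J f, g\<rangle> = \<langle>f, g\<rangle>\<close>.
  (ii) By reflexivity of \<open>D\<close>, the continuous functional \<open>F \<mapsto> \<langle>g, K F\<rangle>\<close> on \<open>D\<^sup>\<times>\<close> is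
  evaluation at some \<open>K\<^sup>\<times> g \<in> D\<close>; hence \<open>\<langle>\<tau>\<^sub>x, g\<rangle> = m(x) \<langle>\<theta>\<^sub>x, K\<^sup>\<times> g\<rangle>\<close> and
  \<open>\<langle>f, g\<rangle> = \<langle>K M f, g\<rangle> = \<langle>M f, K\<^sup>\<times> g\<rangle>\<close> is again a multiplier integral.\<close>

section \<open>Inner product spaces and the Riesz representation on a dense subspace\<close>

lemma complex_mult_cnj_cmod: "z * cnj z = (complex_of_real (cmod z))\<^sup>2"
  by (simp add: complex_norm_square[symmetric])

lemma nonneg_quadratic_linear_coeff_eq_0:
  fixes a b :: real
  assumes nonneg: "\<forall>t. 0 \<le> 2 * t * a + t\<^sup>2 * b" and "0 \<le> b"
  shows "a = 0"
proof (rule ccontr)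
  assume "a \<noteq> 0"
  define t where "t = - a / (b + 1)"
  have "t * (b + 1) = - a"
    unfolding t_def using \<open>0 \<le> b\<close> by simp
  have "0 \<le> (2 * t * a + t\<^sup>2 * b) * (b + 1)\<^sup>2"
    using nonneg by simp
  also have "\<dots> = 2 * a * (t * (b + 1)) * (b + 1) + (t * (b + 1))\<^sup>2 * b"
    by (simp add: power2_eq_square algebra_simps)
  also have "\<dots> = - (a\<^sup>2 * (b + 2))"
    unfolding \<open>t * (b + 1) = - a\<close> by (simp add: power2_eq_square algebra_simps)
  finally show False
    using \<open>a \<noteq> 0\<close> \<open>0 \<le> b\<close> by (smt (verit) mult_pos_pos zero_less_power2)
qed

locale complex_hilbert_space =
  fixes sm :: "complex \<Rightarrow> 'h::ab_group_add \<Rightarrow> 'h" and ip :: "'h \<Rightarrow> 'h \<Rightarrow> complex"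
  assumes complex_hilbert: "complex_hilbert sm ip"
begin

lemma inner_product_axioms:
  "(\<forall>x y z. ip (x + y) z = ip x z + ip y z) \<and>
   (\<forall>a x y. ip (sm a x) y = a * ip x y) \<and>
   (\<forall>x y. ip y x = cnj (ip x y)) \<and>
   (\<forall>x. Im (ip x x) = 0 \<and> 0 \<le> Re (ip x x)) \<and>
   (\<forall>x. ip x x = 0 \<longrightarrow> x = 0) \<and>
   (\<forall>X::nat \<Rightarrow> 'h. (\<forall>e>0. \<exists>N. \<forall>m\<ge>N. \<forall>n\<ge>N. hnorm ip (X m - X n) < e) \<longrightarrow>
     (\<exists>L. \<forall>e>0. \<exists>N. \<forall>n\<ge>N. hnorm ip (X n - L) < e))"
  using complex_hilbert unfolding complex_hilbert_def by (elim conjE) (intro conjI)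

lemmas ip_add_left = inner_product_axioms[THEN conjunct1, rule_format]
lemmas ip_scale_left = inner_product_axioms[THEN conjunct2, THEN conjunct1, rule_format]
lemmas ip_conj_sym = inner_product_axioms[THEN conjunct2, THEN conjunct2, THEN conjunct1, rule_format]
lemmas ip_self_real = inner_product_axioms[THEN conjunct2, THEN conjunct2, THEN conjunct2, THEN conjunct1,
  rule_format, THEN conjunct1]
lemmas ip_self_nonneg = inner_product_axioms[THEN conjunct2, THEN conjunct2, THEN conjunct2, THEN conjunct1,
  rule_format, THEN conjunct2]
lemmas ip_self_eq_zero = inner_product_axioms[THEN conjunct2, THEN conjunct2, THEN conjunct2, THEN conjunct2,
  THEN conjunct1, rule_format]
lemmas hnorm_Cauchy_convergent = inner_product_axioms[THEN conjunct2, THEN conjunct2, THEN conjunct2,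
  THEN conjunct2, THEN conjunct2, THEN spec, THEN mp]

lemma ip_add_right: "ip z (x + y) = ip z x + ip z y"
  using ip_add_left[of x y z] ip_conj_sym by (metis complex_cnj_add)

lemma ip_scale_right: "ip x (sm a y) = cnj a * ip x y"
  by (metis ip_scale_left ip_conj_sym complex_cnj_mult)

lemma ip_zero_left: "ip 0 y = 0"
  using ip_add_left[of 0 0 y] by simp

lemma ip_zero_right: "ip y 0 = 0"
  using ip_add_right[of y 0 0] by simp

lemma ip_diff_left: "ip (x - y) z = ip x z - ip y z"
  using ip_add_left[of "x - y" y z] by (simp add: eq_diff_eq)

lemma ip_diff_right: "ip z (x - y) = ip z x - ip z y"
  using ip_add_right[of z "x - y" y] by (simp add: eq_diff_eq)

definition sqnorm :: "'h \<Rightarrow> real" where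
  "sqnorm x = Re (ip x x)"

lemma sqnorm_nonneg: "0 \<le> sqnorm x"
  unfolding sqnorm_def by (rule ip_self_nonneg)

lemma ip_self_eq_sqnorm: "ip x x = complex_of_real (sqnorm x)"
  using ip_self_real[of x] by (simp add: sqnorm_def complex_eq_iff)

lemma sqnorm_eq_zero_iff: "sqnorm x = 0 \<longleftrightarrow> x = 0"
  using ip_self_eq_sqnorm ip_self_eq_zero ip_zero_left by fastforce

lemma hnorm_eq_sqrt_sqnorm: "hnorm ip x = sqrt (sqnorm x)"
  by (simp add: hnorm_def sqnorm_def)

lemma hnorm_power2: "(hnorm ip x)\<^sup>2 = sqnorm x"
  using sqnorm_nonneg[of x] by (simp add: hnorm_eq_sqrt_sqnorm)

lemma hnorm_nonneg: "0 \<le> hnorm ip x"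
  by (simp add: hnorm_eq_sqrt_sqnorm sqnorm_nonneg)

lemma sqnorm_add: "sqnorm (x + y) = sqnorm x + sqnorm y + 2 * Re (ip x y)"
proof -
  have "ip (x + y) (x + y) = ip x x + ip x y + ip y x + ip y y"
    by (simp add: ip_add_left ip_add_right)
  moreover have "Re (ip y x) = Re (ip x y)"
    by (subst ip_conj_sym) simp
  ultimately show ?thesis
    by (simp add: sqnorm_def)
qed

lemma sqnorm_diff: "sqnorm (x - y) = sqnorm x + sqnorm y - 2 * Re (ip x y)"
proof -
  have "ip (x - y) (x - y) = ip x x - ip x y - ip y x + ip y y"
    by (simp add: ip_diff_left ip_diff_right)
  moreover have "Re (ip y x) = Re (ip x y)"
    by (subst ip_conj_sym) simp
  ultimately show ?thesis
    by (simp add: sqnorm_def)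
qed

lemma sqnorm_scale: "sqnorm (sm a x) = (cmod a)\<^sup>2 * sqnorm x"
proof -
  have "ip (sm a x) (sm a x) = (a * cnj a) * ip x x"
    by (simp add: ip_scale_left ip_scale_right)
  also have "\<dots> = complex_of_real ((cmod a)\<^sup>2 * sqnorm x)"
    by (simp add: ip_self_eq_sqnorm complex_mult_cnj_cmod)
  finally show ?thesis
    by (simp add: sqnorm_def)
qed

lemma Cauchy_Schwarz: "cmod (ip x y) \<le> hnorm ip x * hnorm ip y"
proof (cases "y = 0")
  case True
  then show ?thesis
    by (simp add: ip_zero_right hnorm_nonneg)
next
  case False
  then have Ny: "sqnorm y > 0"
    using sqnorm_nonneg[of y] sqnorm_eq_zero_iff[of y] by linarith
  define z where "z = ip x y"
  \<comment> \<open>expand \<open>0 \<le> \<parallel>x + a y\<parallel>\<^sup>2\<close> at the minimising \<open>a = - z / \<parallel>y\<parallel>\<^sup>2\<close>\<close>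
  define a where "a = - z / complex_of_real (sqnorm y)"
  have "cnj a * z = - complex_of_real ((cmod z)\<^sup>2 / sqnorm y)"
    unfolding a_def by (simp add: complex_mult_cnj_cmod mult.commute)
  moreover have "(cmod a)\<^sup>2 = (cmod z)\<^sup>2 / (sqnorm y)\<^sup>2"
    unfolding a_def using Ny by (simp add: norm_divide power_divide)
  moreover have "sqnorm (x + sm a y) = sqnorm x + 2 * Re (cnj a * z) + (cmod a)\<^sup>2 * sqnorm y"
    by (simp add: sqnorm_add sqnorm_scale ip_scale_right z_def)
  ultimately have "0 \<le> sqnorm x - (cmod z)\<^sup>2 / sqnorm y"
    using sqnorm_nonneg[of "x + sm a y"] Ny by (simp add: power2_eq_square)
  then have "(cmod z)\<^sup>2 \<le> sqnorm x * sqnorm y"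
    using Ny by (simp add: field_simps)
  then have "sqrt ((cmod z)\<^sup>2) \<le> sqrt (sqnorm x * sqnorm y)"
    using real_sqrt_le_mono by blast
  then show ?thesis
    by (simp add: z_def hnorm_eq_sqrt_sqnorm real_sqrt_mult)
qed

lemma orthogonal_to_dense_eq_zero:
  assumes dense: "\<forall>h. \<forall>e>0. \<exists>f\<in>D. hnorm ip (h - f) < e"
    and orth: "\<forall>g\<in>D. ip d g = 0"
  shows "d = 0"
proof (rule ccontr)
  assume "d \<noteq> 0"
  then have pos: "hnorm ip d > 0"
    using sqnorm_eq_zero_iff[of d] sqnorm_nonneg[of d] by (simp add: hnorm_eq_sqrt_sqnorm)
  obtain g where g: "g \<in> D" "hnorm ip (d - g) < hnorm ip d / 2"
    using dense pos by (meson half_gt_zero)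
  have "(hnorm ip d)\<^sup>2 = cmod (ip d d)"
    by (simp add: hnorm_power2 ip_self_eq_sqnorm sqnorm_nonneg)
  also have "ip d d = ip d (d - g)"
    using orth g by (simp add: ip_diff_right)
  also have "cmod (ip d (d - g)) \<le> hnorm ip d * hnorm ip (d - g)"
    by (rule Cauchy_Schwarz)
  also have "\<dots> \<le> hnorm ip d * (hnorm ip d / 2)"
    using g(2) pos by (intro mult_left_mono) auto
  finally show False
    using pos by (simp add: power2_eq_square)
qed

context
  fixes D :: "'h set" and \<Phi> :: "'h \<Rightarrow> complex" and C :: real
  assumes zero_in_D: "0 \<in> D"
    and add_in_D: "\<And>f g. f \<in> D \<Longrightarrow> g \<in> D \<Longrightarrow> f + g \<in> D"
    and scale_in_D: "\<And>c f. f \<in> D \<Longrightarrow> sm c f \<in> D"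
    and dense_D: "\<forall>h. \<forall>e>0. \<exists>f\<in>D. hnorm ip (h - f) < e"
    and \<Phi>_add: "\<And>f g. f \<in> D \<Longrightarrow> g \<in> D \<Longrightarrow> \<Phi> (f + g) = \<Phi> f + \<Phi> g"
    and \<Phi>_scale: "\<And>c f. f \<in> D \<Longrightarrow> \<Phi> (sm c f) = cnj c * \<Phi> f"
    and \<Phi>_bounded: "\<And>g. g \<in> D \<Longrightarrow> cmod (\<Phi> g) \<le> C * hnorm ip g"
begin

text \<open>If \<open>h\<close> represents \<open>\<Phi>\<close>, then \<open>energy u = sqnorm (u - h) - sqnorm h\<close>; so \<open>h\<close> is found as
  the limit of a minimising sequence, which is Cauchy by the parallelogram law.\<close>

definition energy :: "'h \<Rightarrow> real" where
  "energy u = sqnorm u - 2 * Re (\<Phi> u)"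

lemma energy_bounded_below:
  assumes "u \<in> D"
  shows "- (C\<^sup>2) \<le> energy u"
proof -
  have "Re (\<Phi> u) \<le> \<bar>C\<bar> * hnorm ip u"
    using complex_Re_le_cmod[of "\<Phi> u"] \<Phi>_bounded[OF assms] hnorm_nonneg[of u]
    by (smt (verit) mult_right_mono abs_ge_self)
  moreover have "0 \<le> (hnorm ip u - \<bar>C\<bar>)\<^sup>2"
    by simp
  ultimately show ?thesis
    unfolding energy_def hnorm_power2[symmetric] by (simp add: power2_eq_square algebra_simps)
qed

lemma Inf_energy_le:
  assumes "u \<in> D"
  shows "Inf (energy ` D) \<le> energy u"
  using energy_bounded_below assms by (intro cInf_lower bdd_belowI2) auto

lemma sqnorm_diff_le_energy:
  assumes "u \<in> D" "v \<in> D"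
  shows "sqnorm (u - v) \<le> 2 * energy u + 2 * energy v - 4 * Inf (energy ` D)"
proof -
  define w where "w = sm (1/2) (u + v)"
  have "w \<in> D"
    unfolding w_def using assms add_in_D scale_in_D by blast
  then have "Inf (energy ` D) \<le> energy w"
    by (rule Inf_energy_le)
  moreover have "energy w = sqnorm (u + v) / 4 - Re (\<Phi> u) - Re (\<Phi> v)"
    unfolding energy_def w_def using assms
    by (simp add: sqnorm_scale \<Phi>_scale \<Phi>_add add_in_D power2_eq_square add_divide_distrib)
  moreover have "sqnorm (u + v) + sqnorm (u - v) = 2 * sqnorm u + 2 * sqnorm v"
    by (simp add: sqnorm_add sqnorm_diff)
  ultimately show ?thesis
    unfolding energy_def by simp
qed

lemma minimising_sequence_exists:
  obtains u where "\<And>n. u n \<in> D" "\<And>n. energy (u n) < Inf (energy ` D) + 1 / real (Suc n)"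
proof -
  have "\<forall>n. \<exists>u. u \<in> D \<and> energy u < Inf (energy ` D) + 1 / real (Suc n)"
    using cInf_lessD[of "energy ` D"] zero_in_D by force
  then obtain u where "\<forall>n. u n \<in> D \<and> energy (u n) < Inf (energy ` D) + 1 / real (Suc n)"
    by (auto dest: choice)
  then show ?thesis
    using that by blast
qed

context
  fixes u :: "nat \<Rightarrow> 'h"
  assumes u_in_D: "\<And>n. u n \<in> D"
    and u_minimising: "\<And>n. energy (u n) < Inf (energy ` D) + 1 / real (Suc n)"
begin

lemma minimising_sequence_Cauchy:
  "\<forall>e>0. \<exists>M. \<forall>m\<ge>M. \<forall>n\<ge>M. hnorm ip (u m - u n) < e"
proof (intro allI impI)
  fix e :: real
  assume "e > 0"
  obtain M where M: "1 / real (Suc M) < e\<^sup>2 / 4"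
    using reals_Archimedean[of "e\<^sup>2 / 4"] \<open>e > 0\<close> by (auto simp: inverse_eq_divide)
  have "hnorm ip (u m - u n) < e" if "M \<le> m" "M \<le> n" for m n
  proof -
    have "1 / real (Suc m) \<le> 1 / real (Suc M)" "1 / real (Suc n) \<le> 1 / real (Suc M)"
      using that by (simp_all add: frac_le)
    then have "sqnorm (u m - u n) < e\<^sup>2"
      using sqnorm_diff_le_energy[OF u_in_D u_in_D, of m n] u_minimising[of m] u_minimising[of n] M
      by linarith
    then have "sqrt (sqnorm (u m - u n)) < sqrt (e\<^sup>2)"
      by (rule real_sqrt_less_mono)
    then show ?thesis
      using \<open>e > 0\<close> by (simp add: hnorm_eq_sqrt_sqnorm)
  qed
  then show "\<exists>M. \<forall>m\<ge>M. \<forall>n\<ge>M. hnorm ip (u m - u n) < e"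
    by blast
qed

lemma minimising_sequence_converges:
  obtains h where "(\<lambda>n. hnorm ip (u n - h)) \<longlonglongrightarrow> 0"
proof -
  obtain h where "\<forall>e>0. \<exists>M. \<forall>n\<ge>M. hnorm ip (u n - h) < e"
    using hnorm_Cauchy_convergent[OF minimising_sequence_Cauchy] by blast
  then have "(\<lambda>n. hnorm ip (u n - h)) \<longlonglongrightarrow> 0"
    unfolding lim_sequentially by (simp add: dist_real_def hnorm_nonneg)
  then show ?thesis
    using that by blast
qed

context
  fixes h :: 'h
  assumes u_tendsto_h: "(\<lambda>n. hnorm ip (u n - h)) \<longlonglongrightarrow> 0"
begin

lemma Re_ip_tendsto:
  "(\<lambda>n. Re (ip (u n) g)) \<longlonglongrightarrow> Re (ip h g)"
proof -
  have "(\<lambda>n. Re (ip (u n) g) - Re (ip h g)) \<longlonglongrightarrow> 0"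
  proof (rule Lim_null_comparison)
    have "norm (Re (ip (u n) g) - Re (ip h g)) \<le> hnorm ip (u n - h) * hnorm ip g" for n
    proof -
      have "norm (Re (ip (u n) g) - Re (ip h g)) \<le> cmod (ip (u n - h) g)"
        using abs_Re_le_cmod[of "ip (u n) g - ip h g"] by (simp add: ip_diff_left)
      also have "\<dots> \<le> hnorm ip (u n - h) * hnorm ip g"
        by (rule Cauchy_Schwarz)
      finally show ?thesis .
    qed
    then show "\<forall>\<^sub>F n in sequentially. norm (Re (ip (u n) g) - Re (ip h g)) \<le> hnorm ip (u n - h) * hnorm ip g"
      by simp
    show "(\<lambda>n. hnorm ip (u n - h) * hnorm ip g) \<longlonglongrightarrow> 0"
      using tendsto_mult_left_zero[OF u_tendsto_h] by simp
  qed
  then show ?thesis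
    by (simp add: LIM_zero_iff)
qed

lemma limit_Re_represents:
  assumes "g \<in> D"
  shows "Re (ip h g) = Re (\<Phi> g)"
proof -
  define a where "a n = Re (ip (u n) g) - Re (\<Phi> g)" for n
  have "0 \<le> 2 * t * (Re (ip h g) - Re (\<Phi> g)) + t\<^sup>2 * sqnorm g" for t :: real
  proof -
    have "energy (u n + sm (complex_of_real t) g) = energy (u n) + 2 * t * a n + t\<^sup>2 * sqnorm g" for n
      unfolding energy_def a_def using u_in_D assms
      by (simp add: sqnorm_add sqnorm_scale ip_scale_right \<Phi>_add \<Phi>_scale scale_in_D algebra_simps)
    then have "0 \<le> 1 / real (Suc n) + 2 * t * a n + t\<^sup>2 * sqnorm g" for n
      using Inf_energy_le[of "u n + sm (complex_of_real t) g"] u_minimising[of n]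
        u_in_D assms add_in_D scale_in_D by fastforce
    moreover have "(\<lambda>n. 1 / real (Suc n) + 2 * t * a n + t\<^sup>2 * sqnorm g)
        \<longlonglongrightarrow> 0 + 2 * t * (Re (ip h g) - Re (\<Phi> g)) + t\<^sup>2 * sqnorm g"
      unfolding a_def by (intro tendsto_intros Re_ip_tendsto LIMSEQ_Suc[OF lim_inverse_n'])
    ultimately show ?thesis
      by (intro LIMSEQ_le_const) auto
  qed
  then have "Re (ip h g) - Re (\<Phi> g) = 0"
    using nonneg_quadratic_linear_coeff_eq_0 sqnorm_nonneg by blast
  then show ?thesis
    by simp
qed

lemma limit_represents:
  assumes "g \<in> D"
  shows "ip h g = \<Phi> g"
proof (rule complex_eqI)
  show "Re (ip h g) = Re (\<Phi> g)"
    using assms by (rule limit_Re_represents)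
  have "Re (ip h (sm \<i> g)) = Re (\<Phi> (sm \<i> g))"
    using assms scale_in_D by (intro limit_Re_represents)
  then show "Im (ip h g) = Im (\<Phi> g)"
    using assms by (simp add: ip_scale_right \<Phi>_scale)
qed

end

end

theorem Riesz_representation_dense: "\<exists>!h. \<forall>g\<in>D. ip h g = \<Phi> g"
proof -
  obtain u where u: "\<And>n. u n \<in> D" "\<And>n. energy (u n) < Inf (energy ` D) + 1 / real (Suc n)"
    using minimising_sequence_exists by blast
  obtain h where "(\<lambda>n. hnorm ip (u n - h)) \<longlonglongrightarrow> 0"
    using minimising_sequence_converges[OF u] by blast
  then have represents: "\<forall>g\<in>D. ip h g = \<Phi> g"
    using limit_represents[OF u] by blast
  show ?thesis
  proof (rule ex1I[of _ h])
    fix h' assume "\<forall>g\<in>D. ip h' g = \<Phi> g"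
    then have "\<forall>g\<in>D. ip (h' - h) g = 0"
      using represents by (simp add: ip_diff_left)
    then show "h' = h"
      using orthogonal_to_dense_eq_zero dense_D by fastforce
  qed (fact represents)
qed

end

end

section \<open>Conjugate duals of seminormed spaces\<close>

lemma continuous_map_complex_mult_left:
  "continuous_map X euclidean (f :: _ \<Rightarrow> complex) \<Longrightarrow> continuous_map X euclidean (\<lambda>x. c * f x)"
  by (simp add: continuous_map_atin tendsto_mult_left)

lemma continuous_map_cnj:
  "continuous_map X euclidean (f :: _ \<Rightarrow> complex) \<Longrightarrow> continuous_map X euclidean (\<lambda>x. cnj (f x))"
  by (simp add: continuous_map_atin tendsto_cnj)

lemma topspace_seminorm_topology: "topspace (seminorm_topology S Q) = S"
  unfolding seminorm_topology_def by auto

lemma openin_seminorm_ball: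
  "q \<in> Q \<Longrightarrow> x \<in> S \<Longrightarrow> openin (seminorm_topology S Q) {y\<in>S. q (y - x) < r}"
  unfolding seminorm_topology_def openin_topology_generated_by_iff
  by (rule generate_topology_on.Basis) blast

lemma conj_dual_continuous:
  "F \<in> conj_dual sm S Q \<Longrightarrow> continuous_map (seminorm_topology S Q) euclidean F"
  and conj_dual_add: "F \<in> conj_dual sm S Q \<Longrightarrow> x \<in> S \<Longrightarrow> y \<in> S \<Longrightarrow> F (x + y) = F x + F y"
  and conj_dual_scale: "F \<in> conj_dual sm S Q \<Longrightarrow> x \<in> S \<Longrightarrow> F (sm c x) = cnj c * F x"
  and conj_dual_outside: "F \<in> conj_dual sm S Q \<Longrightarrow> x \<notin> S \<Longrightarrow> F x = 0"
  unfolding conj_dual_def by blast+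

lemma dual_sm_in_conj_dual: "F \<in> conj_dual sm S Q \<Longrightarrow> dual_sm c F \<in> conj_dual sm S Q"
  unfolding conj_dual_def dual_sm_def by (auto simp: continuous_map_complex_mult_left algebra_simps)

lemma add_in_conj_dual:
  assumes F: "F \<in> conj_dual sm S Q" and G: "G \<in> conj_dual sm S Q"
  shows "F + G \<in> conj_dual sm S Q"
proof -
  have "continuous_map (seminorm_topology S Q) euclidean (\<lambda>x. F x + G x)"
    using conj_dual_continuous[OF F] conj_dual_continuous[OF G] by (rule continuous_map_add)
  then show ?thesis
    using conj_dual_add[OF F] conj_dual_add[OF G] conj_dual_scale[OF F] conj_dual_scale[OF G]
      conj_dual_outside[OF F] conj_dual_outside[OF G]
    unfolding conj_dual_def plus_fun_def by (simp add: distrib_left)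
qed

text \<open>Point evaluation is continuous for the strong topology: \<open>{g}\<close> is a bounded set.\<close>

lemma continuous_map_strong_dual_eval:
  assumes "g \<in> S"
  shows "continuous_map (seminorm_topology (conj_dual sm S Q) (strong_seminorms S Q)) euclidean (\<lambda>F. F g)"
  unfolding continuous_map_openin_preimage_eq topspace_seminorm_topology
proof (intro conjI allI impI)
  fix U :: "complex set"
  assume "openin euclidean U"
  define q where "q = (\<lambda>F :: 'a \<Rightarrow> complex. SUP x\<in>{g}. cmod (F x))"
  have "bounded_set S Q {g}"
    unfolding bounded_set_def using assms by simp
  then have q_strong: "q \<in> strong_seminorms S Q"
    unfolding strong_seminorms_def q_def by blast
  have q_eq: "q G = cmod (G g)" for G
    unfolding q_def by simp
  show "openin (seminorm_topology (conj_dual sm S Q) (strong_seminorms S Q))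
      (conj_dual sm S Q \<inter> (\<lambda>F. F g) -` U)"
    unfolding openin_subopen[of _ "conj_dual sm S Q \<inter> (\<lambda>F. F g) -` U"]
  proof
    fix F0
    assume F0: "F0 \<in> conj_dual sm S Q \<inter> (\<lambda>F. F g) -` U"
    then have "F0 g \<in> U"
      by simp
    then obtain r where r: "r > 0" "ball (F0 g) r \<subseteq> U"
      using \<open>openin euclidean U\<close> openE by (metis open_openin)
    let ?T = "{G \<in> conj_dual sm S Q. q (G - F0) < r}"
    have "openin (seminorm_topology (conj_dual sm S Q) (strong_seminorms S Q)) ?T"
      using F0 by (intro openin_seminorm_ball[OF q_strong]) blast
    moreover have "F0 \<in> ?T"
      using F0 r by (simp add: q_eq)
    moreover have "?T \<subseteq> conj_dual sm S Q \<inter> (\<lambda>F. F g) -` U"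
    proof
      fix G
      assume "G \<in> ?T"
      then have "G \<in> conj_dual sm S Q" "dist (G g) (F0 g) < r"
        by (auto simp: q_eq dist_norm)
      then show "G \<in> conj_dual sm S Q \<inter> (\<lambda>F. F g) -` U"
        using r by (auto simp: dist_commute)
    qed
    ultimately show "\<exists>T. openin (seminorm_topology (conj_dual sm S Q) (strong_seminorms S Q)) T \<and>
        F0 \<in> T \<and> T \<subseteq> conj_dual sm S Q \<inter> (\<lambda>F. F g) -` U"
      by blast
  qed
qed simp

lemma reflexive_bidual_eval:
  assumes "reflexive_lcs sm S Q"
    and "\<Lambda> \<in> conj_dual dual_sm (conj_dual sm S Q) (strong_seminorms S Q)"
  obtains g where "g \<in> S" "\<And>F. F \<in> conj_dual sm S Q \<Longrightarrow> \<Lambda> F = cnj (F g)"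
proof -
  have "canonical_bidual sm S Q ` S = conj_dual dual_sm (conj_dual sm S Q) (strong_seminorms S Q)"
    using assms(1) unfolding reflexive_lcs_def Let_def by blast
  then obtain g where "g \<in> S" "canonical_bidual sm S Q g = \<Lambda>"
    using assms(2) by force
  then show ?thesis
    using that unfolding canonical_bidual_def by fastforce
qed

lemma conj_dual_op_transpose:
  assumes refl: "reflexive_lcs sm S Q"
    and K: "K \<in> cont_ops dual_sm (conj_dual sm S Q) (strong_seminorms S Q)"
    and "g \<in> S"
  obtains g' where "g' \<in> S" "\<And>F. F \<in> conj_dual sm S Q \<Longrightarrow> K F g = F g'"
proof -
  define Dx where "Dx = conj_dual sm S Q"
  define Qx where "Qx = strong_seminorms S Q"
  define \<Lambda> where "\<Lambda> F = (if F \<in> Dx then cnj (K F g) else 0)" for F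
  have K_cont: "continuous_map (seminorm_topology Dx Qx) (seminorm_topology Dx Qx) K"
    and K_add: "\<And>F G. F \<in> Dx \<Longrightarrow> G \<in> Dx \<Longrightarrow> K (F + G) = K F + K G"
    and K_scale: "\<And>c F. F \<in> Dx \<Longrightarrow> K (dual_sm c F) = dual_sm c (K F)"
    using K unfolding cont_ops_def Dx_def Qx_def by blast+
  have "continuous_map (seminorm_topology Dx Qx) euclidean (\<lambda>F. cnj (K F g))"
    using continuous_map_cnj[OF continuous_map_compose[OF K_cont
        continuous_map_strong_dual_eval[OF \<open>g \<in> S\<close>, of sm Q, folded Dx_def Qx_def]]]
    by (simp add: o_def)
  then have "continuous_map (seminorm_topology Dx Qx) euclidean \<Lambda>"
    by (rule continuous_map_eq) (simp add: topspace_seminorm_topology \<Lambda>_def)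
  moreover have "\<Lambda> (F + G) = \<Lambda> F + \<Lambda> G" if "F \<in> Dx" "G \<in> Dx" for F G
    using that add_in_conj_dual[of F sm S Q G] by (simp add: \<Lambda>_def K_add Dx_def)
  moreover have "\<Lambda> (dual_sm c F) = cnj c * \<Lambda> F" if "F \<in> Dx" for c F
    using that dual_sm_in_conj_dual[of F sm S Q c] K_scale[OF that, of c]
    by (simp add: \<Lambda>_def dual_sm_def Dx_def)
  ultimately have "\<Lambda> \<in> conj_dual dual_sm Dx Qx"
    unfolding conj_dual_def by (simp add: \<Lambda>_def)
  then obtain g' where "g' \<in> S" "\<And>F. F \<in> Dx \<Longrightarrow> \<Lambda> F = cnj (F g')"
    using reflexive_bidual_eval[OF refl] unfolding Dx_def Qx_def by blast
  then show ?thesis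
    using that unfolding \<Lambda>_def Dx_def by (metis complex_cnj_cnj)
qed

section \<open>Distribution multipliers on a rigged Hilbert space\<close>

locale rigged_hilbert_space =
  fixes sm :: "complex \<Rightarrow> 'h::ab_group_add \<Rightarrow> 'h" and ip :: "'h \<Rightarrow> 'h \<Rightarrow> complex"
    and D :: "'h set" and P :: "('h \<Rightarrow> real) set"
  assumes rigged_hilbert: "rigged_hilbert sm ip D P"
begin

sublocale complex_hilbert_space sm ip
  using rigged_hilbert unfolding rigged_hilbert_def complex_hilbert_space_def by (elim conjE)

lemma zero_in_D: "0 \<in> D"
  and add_in_D: "f \<in> D \<Longrightarrow> g \<in> D \<Longrightarrow> f + g \<in> D"
  and scale_in_D: "f \<in> D \<Longrightarrow> sm c f \<in> D"
  and dense_D: "\<forall>h. \<forall>e>0. \<exists>f\<in>D. hnorm ip (h - f) < e"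
  and norm_open_imp_openin: "U \<subseteq> D \<Longrightarrow> (\<And>f. f \<in> U \<Longrightarrow> \<exists>e>0. {g\<in>D. hnorm ip (g - f) < e} \<subseteq> U)
      \<Longrightarrow> openin (seminorm_topology D P) U"
  using rigged_hilbert unfolding rigged_hilbert_def by simp_all

lemma continuous_map_ip_left:
  "continuous_map (seminorm_topology D P) euclidean (ip h)"
  unfolding continuous_map_openin_preimage_eq topspace_seminorm_topology
proof (intro conjI allI impI)
  fix U :: "complex set"
  assume "openin euclidean U"
  show "openin (seminorm_topology D P) (D \<inter> ip h -` U)"
  proof (rule norm_open_imp_openin)
    fix f
    assume "f \<in> D \<inter> ip h -` U"
    then obtain r where r: "r > 0" "ball (ip h f) r \<subseteq> U"
      using \<open>openin euclidean U\<close> openE by (metis IntD2 open_openin vimageE)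
    define e where "e = r / (hnorm ip h + 1)"
    have "hnorm ip h + 1 > 0"
      using hnorm_nonneg[of h] by linarith
    then have "e > 0" "(hnorm ip h + 1) * e = r"
      unfolding e_def using r by auto
    have "ip h g \<in> U" if "hnorm ip (g - f) < e" for g
    proof -
      have "cmod (ip h g - ip h f) \<le> hnorm ip h * hnorm ip (g - f)"
        using Cauchy_Schwarz[of h "g - f"] by (simp add: ip_diff_right)
      also have "\<dots> \<le> hnorm ip h * e"
        using that hnorm_nonneg[of h] by (intro mult_left_mono) auto
      also have "\<dots> < r"
        using \<open>e > 0\<close> \<open>(hnorm ip h + 1) * e = r\<close> by (simp add: distrib_right)
      finally show ?thesis
        using r by (auto simp: dist_norm norm_minus_commute)
    qed
    then show "\<exists>e>0. {g\<in>D. hnorm ip (g - f) < e} \<subseteq> D \<inter> ip h -` U"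
      using \<open>e > 0\<close> by blast
  qed blast
qed simp

lemma emb_in_conj_dual: "emb ip D h \<in> conj_dual sm D P"
proof -
  have "continuous_map (seminorm_topology D P) euclidean (emb ip D h)"
    by (rule continuous_map_eq[OF continuous_map_ip_left])
      (simp add: topspace_seminorm_topology emb_def)
  then show ?thesis
    unfolding conj_dual_def using add_in_D scale_in_D
    by (auto simp: emb_def ip_add_right ip_scale_right)
qed

lemma multiplier_inner:
  assumes \<theta>_in: "\<forall>x\<in>space \<mu>. \<theta> x \<in> conj_dual sm D P"
    and f: "f \<in> mult_domain ip D \<mu> m \<omega> \<theta>" and g: "g \<in> D"
  shows "ip (multiplier ip D \<mu> m \<omega> \<theta> f) g = integral\<^sup>L \<mu> (mult_integrand m \<omega> \<theta> f g)"
proof -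
  define \<Phi> where "\<Phi> g = integral\<^sup>L \<mu> (mult_integrand m \<omega> \<theta> f g)" for g
  have integrable: "\<And>g. g \<in> D \<Longrightarrow> integrable \<mu> (mult_integrand m \<omega> \<theta> f g)"
    using f unfolding mult_domain_def by blast
  obtain C where bounded: "\<And>g. g \<in> D \<Longrightarrow> cmod (\<Phi> g) \<le> C * hnorm ip g"
    using f unfolding mult_domain_def \<Phi>_def by blast
  have "\<Phi> (g1 + g2) = \<Phi> g1 + \<Phi> g2" if "g1 \<in> D" "g2 \<in> D" for g1 g2
  proof -
    have "\<Phi> (g1 + g2) = (LINT x|\<mu>. mult_integrand m \<omega> \<theta> f g1 x + mult_integrand m \<omega> \<theta> f g2 x)"
      unfolding \<Phi>_def using \<theta>_in that
      by (intro Bochner_Integration.integral_cong) (auto simp: mult_integrand_def conj_dual_add distrib_left)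
    then show ?thesis
      unfolding \<Phi>_def using integrable that by simp
  qed
  moreover have "\<Phi> (sm c g) = cnj c * \<Phi> g" if "g \<in> D" for c g
  proof -
    have "\<Phi> (sm c g) = (LINT x|\<mu>. cnj c * mult_integrand m \<omega> \<theta> f g x)"
      unfolding \<Phi>_def using \<theta>_in that
      by (intro Bochner_Integration.integral_cong) (auto simp: mult_integrand_def conj_dual_scale)
    then show ?thesis
      unfolding \<Phi>_def by simp
  qed
  ultimately have "\<exists>!h. \<forall>g\<in>D. ip h g = \<Phi> g"
    using zero_in_D add_in_D scale_in_D dense_D bounded by (intro Riesz_representation_dense)
  then have "\<forall>g\<in>D. ip (THE h. \<forall>g\<in>D. ip h g = \<Phi> g) g = \<Phi> g"
    by (rule theI')
  then show ?thesis
    using g unfolding multiplier_def \<Phi>_def by blast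
qed

lemma multiplier_right_inverse_reconstruction:
  assumes \<theta>_in: "\<forall>x\<in>space \<mu>. \<theta> x \<in> conj_dual sm D P"
    and dom: "mult_domain ip D \<mu> m \<omega> \<theta> = D"
    and J: "J \<in> cont_ops sm D P"
    and right_inv: "\<forall>f\<in>D. multiplier ip D \<mu> m \<omega> \<theta> (J f) = f"
    and f: "f \<in> D" and g: "g \<in> D"
  shows "integrable \<mu> (\<lambda>x. cnj (adj_op D J (dual_sm (cnj (m x)) (\<omega> x)) f) * \<theta> x g) \<and>
    ip f g = (LINT x|\<mu>. cnj (adj_op D J (dual_sm (cnj (m x)) (\<omega> x)) f) * \<theta> x g)"
proof -
  have "J f \<in> D"
    using J f unfolding cont_ops_def by blast
  have integrand: "(\<lambda>x. cnj (adj_op D J (dual_sm (cnj (m x)) (\<omega> x)) f) * \<theta> x g)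
      = mult_integrand m \<omega> \<theta> (J f) g"
    using f by (auto simp: adj_op_def dual_sm_def mult_integrand_def)
  have integrable: "integrable \<mu> (mult_integrand m \<omega> \<theta> (J f) g)"
    using dom \<open>J f \<in> D\<close> g unfolding mult_domain_def by blast
  have "ip f g = ip (multiplier ip D \<mu> m \<omega> \<theta> (J f)) g"
    using right_inv f by simp
  also have "\<dots> = integral\<^sup>L \<mu> (mult_integrand m \<omega> \<theta> (J f) g)"
    using multiplier_inner[OF \<theta>_in] dom \<open>J f \<in> D\<close> g by simp
  finally show ?thesis
    using integrable unfolding integrand by simp
qed

lemma multiplier_left_inverse_reconstruction:
  assumes refl: "reflexive_lcs sm D P"
    and \<theta>_in: "\<forall>x\<in>space \<mu>. \<theta> x \<in> conj_dual sm D P"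
    and dom: "mult_domain ip D \<mu> m \<omega> \<theta> = D"
    and K: "K \<in> cont_ops dual_sm (conj_dual sm D P) (strong_seminorms D P)"
    and left_inv: "\<forall>f\<in>D. K (emb ip D (multiplier ip D \<mu> m \<omega> \<theta> f)) = emb ip D f"
    and f: "f \<in> D" and g: "g \<in> D"
  shows "integrable \<mu> (\<lambda>x. cnj (\<omega> x f) * K (dual_sm (m x) (\<theta> x)) g) \<and>
    ip f g = (LINT x|\<mu>. cnj (\<omega> x f) * K (dual_sm (m x) (\<theta> x)) g)"
proof -
  obtain g' where "g' \<in> D" and transpose: "\<And>F. F \<in> conj_dual sm D P \<Longrightarrow> K F g = F g'"
    using conj_dual_op_transpose[OF refl K g] by blast
  have integrand: "cnj (\<omega> x f) * K (dual_sm (m x) (\<theta> x)) g = mult_integrand m \<omega> \<theta> f g' x"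
    if "x \<in> space \<mu>" for x
  proof -
    have "dual_sm (m x) (\<theta> x) \<in> conj_dual sm D P"
      using that \<theta>_in dual_sm_in_conj_dual by blast
    then show ?thesis
      using transpose by (simp add: dual_sm_def mult_integrand_def)
  qed
  have "integrable \<mu> (mult_integrand m \<omega> \<theta> f g')"
    using dom f \<open>g' \<in> D\<close> unfolding mult_domain_def by blast
  then have integrable: "integrable \<mu> (\<lambda>x. cnj (\<omega> x f) * K (dual_sm (m x) (\<theta> x)) g)"
    using integrand by (simp cong: Bochner_Integration.integrable_cong)
  have "ip f g = K (emb ip D (multiplier ip D \<mu> m \<omega> \<theta> f)) g"
    using left_inv f g by (simp add: emb_def)
  also have "\<dots> = ip (multiplier ip D \<mu> m \<omega> \<theta> f) g'"
    using transpose[OF emb_in_conj_dual] \<open>g' \<in> D\<close> by (simp add: emb_def)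
  also have "\<dots> = integral\<^sup>L \<mu> (mult_integrand m \<omega> \<theta> f g')"
    using multiplier_inner[OF \<theta>_in] dom f \<open>g' \<in> D\<close> by simp
  also have "\<dots> = (LINT x|\<mu>. cnj (\<omega> x f) * K (dual_sm (m x) (\<theta> x)) g)"
    using integrand by (simp cong: Bochner_Integration.integral_cong)
  finally show ?thesis
    using integrable by simp
qed

end

theorem theorem3p3:
  fixes sm :: "complex \<Rightarrow> 'h::ab_group_add \<Rightarrow> 'h"
    and ip :: "'h \<Rightarrow> 'h \<Rightarrow> complex"
    and D :: "'h set"
    and P :: "('h \<Rightarrow> real) set"
    and \<mu> :: "'x measure"
    and \<omega> \<theta> :: "'x \<Rightarrow> 'h \<Rightarrow> complex"
    and m :: "'x \<Rightarrow> complex"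
  assumes rhs: "rigged_hilbert sm ip D P"
    and refl: "reflexive_lcs sm D P"
    and sigma: "sigma_finite_measure \<mu>"
    and \<omega>_in: "\<forall>x\<in>space \<mu>. \<omega> x \<in> conj_dual sm D P"
    and \<theta>_in: "\<forall>x\<in>space \<mu>. \<theta> x \<in> conj_dual sm D P"
    and \<omega>_meas: "\<forall>f\<in>D. (\<lambda>x. cnj (\<omega> x f)) \<in> borel_measurable \<mu>"
    and \<theta>_meas: "\<forall>f\<in>D. (\<lambda>x. cnj (\<theta> x f)) \<in> borel_measurable \<mu>"
    and m_meas: "m \<in> borel_measurable \<mu>"
    and dom: "mult_domain ip D \<mu> m \<omega> \<theta> = D"
  shows
    "(\<forall>J \<in> cont_ops sm D P.
        (\<forall>f\<in>D. multiplier ip D \<mu> m \<omega> \<theta> (J f) = f) \<longrightarrow>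
        (let \<rho> = (\<lambda>x. adj_op D J (dual_sm (cnj (m x)) (\<omega> x)))
         in \<forall>f\<in>D. \<forall>g\<in>D.
              integrable \<mu> (\<lambda>x. cnj (\<rho> x f) * \<theta> x g) \<and>
              ip f g = (LINT x|\<mu>. cnj (\<rho> x f) * \<theta> x g)))
   \<and>
    (\<forall>K \<in> cont_ops dual_sm (conj_dual sm D P) (strong_seminorms D P).
        (\<forall>f\<in>D. K (emb ip D (multiplier ip D \<mu> m \<omega> \<theta> f)) = emb ip D f) \<longrightarrow>
        (let \<tau> = (\<lambda>x. K (dual_sm (m x) (\<theta> x)))
         in \<forall>f\<in>D. \<forall>g\<in>D.
              integrable \<mu> (\<lambda>x. cnj (\<omega> x f) * \<tau> x g) \<and>
              ip f g = (LINT x|\<mu>. cnj (\<omega> x f) * \<tau> x g)))"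
proof -
  interpret rigged_hilbert_space sm ip D P
    by (rule rigged_hilbert_space.intro) (fact rhs)
  show ?thesis
    unfolding Let_def
    using multiplier_right_inverse_reconstruction[OF \<theta>_in dom]
      multiplier_left_inverse_reconstruction[OF refl \<theta>_in dom]
    by (intro conjI ballI impI) simp_all
qed

end
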